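(* Assume $p\in W^{1,\infty}((0,\infty)\times\mathbb{R})$ satisfies $p_*\mathbb{1}_{\{s>s_*\}}\le p(s,S)\le p_\infty$ for all $s\ge0$, $S\in\mathbb{R}$, for some constants $p_*,p_\infty,s_*>0$. Then the function $F:\mathbb{R}\to\mathbb{R}_+$ defined by $$F(S)=\left(\int_0^\infty e^{-\int_0^sp(\tau,S)\,d\tau}\,ds\right)^{-1}$$ is bounded and Lipschitz. *)

theory Defs
  imports "HOL-Analysis.Analysis"
begin

text \<open>W^{1,\<infinity>}(\<Omega>) on the convex open set \<Omega> = (0,\<infinity>) \<times> \<real>, identified with its
  (unique) Lipschitz continuous representative: a bounded, Lipschitz function on \<Omega>.\<close>
definition W1inf_on :: "(real \<times> real) set \<Rightarrow> (real \<Rightarrow> real \<Rightarrow> real) \<Rightarrow> bool" where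
  "W1inf_on \<Omega> p \<longleftrightarrow>
     bounded ((\<lambda>(s, S). p s S) ` \<Omega>) \<and> (\<exists>L. L-lipschitz_on \<Omega> (\<lambda>(s, S). p s S))"

definition Fmap :: "(real \<Rightarrow> real \<Rightarrow> real) \<Rightarrow> real \<Rightarrow> real" where
  "Fmap p S = inverse (integral {0..} (\<lambda>s. exp (- integral {0..s} (\<lambda>\<tau>. p \<tau> S))))"

end

theory Submission
  imports Defs
begin

text \<open>
  Write \<open>E\<^sub>S(s) = exp (-\<integral>\<^sub>0\<^sup>s p(\<tau>,S) d\<tau>)\<close>, so that \<open>F(S) = 1 / \<integral>\<^sub>0\<^sup>\<infinity> E\<^sub>S\<close>.
  From \<open>p \<le> p\<^sub>\<infinity>\<close> we get \<open>E\<^sub>S(s) \<ge> exp (-p\<^sub>\<infinity> s)\<close>, hence \<open>\<integral> E\<^sub>S \<ge> 1/p\<^sub>\<infinity>\<close> and \<open>F \<le> p\<^sub>\<infinity>\<close>.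
  From \<open>p \<ge> p\<^sub>*\<close> beyond \<open>s\<^sub>*\<close> we get \<open>E\<^sub>S(s) \<le> exp (p\<^sub>* s\<^sub>*) exp (-p\<^sub>* s)\<close>, and since
  \<open>p\<close> is \<open>M\<close>-Lipschitz in \<open>S\<close>, the exponents of \<open>E\<^sub>S(s)\<close> and \<open>E\<^sub>S\<^sub>'(s)\<close> differ by at most
  \<open>M s |S - S'|\<close>. The mean value theorem for \<open>exp\<close> thus bounds \<open>|E\<^sub>S(s) - E\<^sub>S\<^sub>'(s)|\<close> by an
  integrable multiple of \<open>s exp (-p\<^sub>* s) |S - S'|\<close>, so \<open>S \<mapsto> \<integral> E\<^sub>S\<close> is Lipschitz; being
  bounded below by \<open>1/p\<^sub>\<infinity>\<close>, so is its inverse \<open>F\<close>.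
\<close>

lemma abs_exp_minus_diff_le:
  fixes a b :: real
  shows "\<bar>exp (- a) - exp (- b)\<bar> \<le> exp (- min a b) * \<bar>a - b\<bar>"
proof -
  have ordered: "\<bar>exp (- a) - exp (- b)\<bar> \<le> exp (- a) * (b - a)" if "a \<le> b" for a b :: real
  proof -
    have "exp (- a) - exp (- b) = exp (- a) * (1 - exp (a - b))"
      by (simp add: algebra_simps flip: exp_add)
    moreover have "0 \<le> 1 - exp (a - b)"
      using that by simp
    moreover have "1 - exp (a - b) \<le> b - a"
      using exp_ge_add_one_self[of "a - b"] by linarith
    ultimately show ?thesis
      by (simp add: mult_left_mono)
  qed
  show ?thesis
    using ordered[of a b] ordered[of b a] by (cases "a \<le> b") (auto simp: min_def abs_minus_commute)
qed

lemma mult_exp_neg_le: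
  fixes c s :: real
  assumes "0 < c"
  shows "s * exp (- c * s) \<le> 2 / c * exp (- (c / 2) * s)"
proof -
  have "s \<le> 2 / c * exp (c * s / 2)"
    using exp_ge_add_one_self[of "c * s / 2"] assms by (simp add: field_simps)
  then have "s * exp (- c * s) \<le> 2 / c * exp (c * s / 2) * exp (- c * s)"
    by (rule mult_right_mono) simp
  also have "\<dots> = 2 / c * exp (- (c / 2) * s)"
    by (simp add: mult.assoc flip: exp_add)
  finally show ?thesis .
qed

lemma lipschitz_on_inverse:
  fixes f :: "'a::metric_space \<Rightarrow> real"
  assumes "K-lipschitz_on U f" and "0 < m" and "\<And>x. x \<in> U \<Longrightarrow> m \<le> f x"
  shows "(K / m\<^sup>2)-lipschitz_on U (\<lambda>x. inverse (f x))"
proof (rule lipschitz_onI)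
  show "0 \<le> K / m\<^sup>2"
    using lipschitz_on_nonneg[OF assms(1)] by simp
  fix x y assume "x \<in> U" "y \<in> U"
  then have "0 < m" "m \<le> f x" "m \<le> f y" "dist (f x) (f y) \<le> K * dist x y"
    using assms lipschitz_onD[OF assms(1)] by auto
  moreover have "m\<^sup>2 \<le> f x * f y"
    using \<open>0 < m\<close> \<open>m \<le> f x\<close> \<open>m \<le> f y\<close> by (simp add: power2_eq_square mult_mono)
  ultimately have "\<bar>f y - f x\<bar> / (f x * f y) \<le> K * dist x y / m\<^sup>2"
    by (intro frac_le) (auto simp: dist_real_def abs_minus_commute)
  moreover have "dist (inverse (f x)) (inverse (f y)) = \<bar>f y - f x\<bar> / (f x * f y)"
    using \<open>0 < m\<close> \<open>m \<le> f x\<close> \<open>m \<le> f y\<close>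
    by (simp add: dist_real_def inverse_diff_inverse abs_mult divide_inverse)
  ultimately show "dist (inverse (f x)) (inverse (f y)) \<le> K / m\<^sup>2 * dist x y"
    by simp
qed

lemma integrable_on_Icc_if_bounded_continuous_on_Ioc:
  fixes f :: "real \<Rightarrow> real"
  assumes "continuous_on {a<..b} f" and "\<And>x. x \<in> {a..b} \<Longrightarrow> \<bar>f x\<bar> \<le> B"
  shows "f integrable_on {a..b}"
proof -
  have null: "negligible ({a..b} - {a<..b} \<union> ({a<..b} - {a..b}))"
    by (rule negligible_subset[of "{a}"]) auto
  have "f \<in> borel_measurable (lebesgue_on {a<..b})"
    using assms(1) by (rule continuous_imp_measurable_on_sets_lebesgue) simp
  moreover have "(\<lambda>_. B) integrable_on {a<..b}"
    using integrable_spike_set_eq[OF null] integrable_const_ivl by blast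
  ultimately have "f integrable_on {a<..b}"
    by (rule measurable_bounded_by_integrable_imp_integrable_real) (use assms(2) in auto)
  then show ?thesis
    using integrable_spike_set_eq[OF null] by blast
qed

definition cumulative_hazard :: "(real \<Rightarrow> real) \<Rightarrow> real \<Rightarrow> real" where
  "cumulative_hazard q s = integral {0..s} q"

definition survival :: "(real \<Rightarrow> real) \<Rightarrow> real \<Rightarrow> real" where
  "survival q s = exp (- cumulative_hazard q s)"

definition mean_lifetime :: "(real \<Rightarrow> real) \<Rightarrow> real" where
  "mean_lifetime q = integral {0..} (survival q)"

lemma Fmap_eq_inverse_mean_lifetime: "Fmap p = (\<lambda>S. inverse (mean_lifetime (\<lambda>\<tau>. p \<tau> S)))"
  by (simp add: fun_eq_iff Fmap_def mean_lifetime_def survival_def[abs_def] cumulative_hazard_def)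

lemma abs_cumulative_hazard_diff_le:
  assumes "q1 integrable_on {0..s}" and "q2 integrable_on {0..s}"
    and "\<And>\<tau>. 0 < \<tau> \<Longrightarrow> \<bar>q1 \<tau> - q2 \<tau>\<bar> \<le> \<delta>" and "0 \<le> s"
  shows "\<bar>cumulative_hazard q1 s - cumulative_hazard q2 s\<bar> \<le> \<delta> * s"
proof -
  let ?d = "\<lambda>\<tau>. if \<tau> = 0 then 0 else q1 \<tau> - q2 \<tau>"
  have "0 \<le> \<delta>"
    using assms(3)[of 1] by simp
  have d_integrable: "?d integrable_on {0..s}"
    by (rule integrable_spike[OF integrable_diff[OF assms(1,2)], of "{0}"]) auto
  have "cumulative_hazard q1 s - cumulative_hazard q2 s = integral {0..s} (\<lambda>\<tau>. q1 \<tau> - q2 \<tau>)"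
    unfolding cumulative_hazard_def using assms by (simp add: integral_diff)
  also have "\<dots> = integral {0..s} ?d"
    by (rule integral_spike[of "{0}"]) auto
  also have "norm \<dots> \<le> integral {0..s} (\<lambda>_. \<delta>)"
  proof (rule integral_norm_bound_integral[OF d_integrable integrable_const_ivl])
    show "norm (?d \<tau>) \<le> \<delta>" if "\<tau> \<in> {0..s}" for \<tau>
      using \<open>0 \<le> \<delta>\<close> assms(3)[of \<tau>] that by auto
  qed
  finally show ?thesis
    using assms(4) by (simp add: mult.commute)
qed

text \<open>Satisfied by \<open>\<tau> \<mapsto> p(\<tau>,S)\<close> for each fixed \<open>S\<close>, with \<open>c\<close>, \<open>b\<close>, \<open>s\<^sub>0\<close> in the roles of
  \<open>p\<^sub>*\<close>, \<open>p\<^sub>\<infinity>\<close>, \<open>s\<^sub>*\<close>.\<close>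
locale hazard_rate =
  fixes q :: "real \<Rightarrow> real" and c b s\<^sub>0 :: real
  assumes integrable: "\<And>s. q integrable_on {0..s}"
    and nonneg: "\<And>\<tau>. 0 \<le> \<tau> \<Longrightarrow> 0 \<le> q \<tau>"
    and upper: "\<And>\<tau>. 0 \<le> \<tau> \<Longrightarrow> q \<tau> \<le> b"
    and lower: "\<And>\<tau>. s\<^sub>0 < \<tau> \<Longrightarrow> c \<le> q \<tau>"
    and c_pos: "0 < c" and s0_nonneg: "0 \<le> s\<^sub>0"
begin

lemma b_pos: "0 < b"
  using c_pos lower[of "s\<^sub>0 + 1"] upper[of "s\<^sub>0 + 1"] s0_nonneg by linarith

lemma integrable_Icc: "0 \<le> s \<Longrightarrow> q integrable_on {s..t}"
  by (rule integrable_on_subinterval[OF integrable[of t]]) auto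

lemma cumulative_hazard_diff:
  assumes "0 \<le> s" "s \<le> t"
  shows "cumulative_hazard q t - cumulative_hazard q s = integral {s..t} q"
  using Henstock_Kurzweil_Integration.integral_combine[OF assms integrable]
  by (simp add: cumulative_hazard_def)

lemma cumulative_hazard_nonneg: "0 \<le> cumulative_hazard q s"
  unfolding cumulative_hazard_def by (rule integral_nonneg[OF integrable]) (auto intro: nonneg)

lemma cumulative_hazard_lipschitz: "b-lipschitz_on {0..} (cumulative_hazard q)"
proof -
  have ordered: "\<bar>cumulative_hazard q t - cumulative_hazard q s\<bar> \<le> b * \<bar>t - s\<bar>"
    if "0 \<le> s" "s \<le> t" for s t
  proof -
    have "0 \<le> integral {s..t} q"
      using that by (intro integral_nonneg integrable_Icc) (auto intro: nonneg)
    moreover have "integral {s..t} q \<le> integral {s..t} (\<lambda>_. b)"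
      using that by (intro integral_le integrable_Icc) (auto intro: upper)
    ultimately show ?thesis
      using cumulative_hazard_diff[OF that] that by (simp add: mult.commute)
  qed
  show ?thesis
  proof (rule lipschitz_onI)
    fix s t :: real assume "s \<in> {0..}" "t \<in> {0..}"
    then show "dist (cumulative_hazard q s) (cumulative_hazard q t) \<le> b * dist s t"
      using ordered[of s t] ordered[of t s] unfolding dist_real_def
      by (metis abs_minus_commute atLeast_iff linorder_le_cases)
  qed (use b_pos in simp)
qed

lemma cumulative_hazard_le: "0 \<le> s \<Longrightarrow> cumulative_hazard q s \<le> b * s"
  using lipschitz_onD[OF cumulative_hazard_lipschitz, of s 0]
  by (simp add: cumulative_hazard_def dist_real_def)

lemma cumulative_hazard_ge: "c * (s - s\<^sub>0) \<le> cumulative_hazard q s"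
proof (cases "s \<le> s\<^sub>0")
  case True
  then show ?thesis
    using c_pos cumulative_hazard_nonneg[of s] mult_nonneg_nonpos[of c "s - s\<^sub>0"] by linarith
next
  case False
  have "(\<lambda>\<tau>. if \<tau> = s\<^sub>0 then c else q \<tau>) integrable_on {s\<^sub>0..s}"
    by (rule integrable_spike[OF integrable_Icc[OF s0_nonneg], of "{s\<^sub>0}"]) auto
  then have "integral {s\<^sub>0..s} (\<lambda>_. c) \<le> integral {s\<^sub>0..s} (\<lambda>\<tau>. if \<tau> = s\<^sub>0 then c else q \<tau>)"
    by (intro integral_le) (auto intro: lower)
  also have "\<dots> = integral {s\<^sub>0..s} q"
    by (rule integral_spike[of "{s\<^sub>0}"]) auto
  finally show ?thesis
    using False cumulative_hazard_diff[OF s0_nonneg, of s] cumulative_hazard_nonneg[of s\<^sub>0]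
    by (simp add: mult.commute)
qed

lemma survival_ge: "0 \<le> s \<Longrightarrow> exp (- b * s) \<le> survival q s"
  using cumulative_hazard_le by (simp add: survival_def)

lemma survival_le: "survival q s \<le> exp (c * s\<^sub>0) * exp (- c * s)"
  using cumulative_hazard_ge[of s] by (simp add: survival_def algebra_simps flip: exp_add)

lemma survival_integrable: "survival q integrable_on {0..}"
proof (rule measurable_bounded_by_integrable_imp_integrable_real)
  show "(\<lambda>s. exp (c * s\<^sub>0) * exp (- c * s)) integrable_on {0..}"
    using c_pos by (intro integrable_on_mult_right integrable_on_exp_minus_to_infinity)
  have "continuous_on {0..} (survival q)"
    unfolding survival_def[abs_def]
    by (intro continuous_intros lipschitz_on_continuous_on[OF cumulative_hazard_lipschitz])
  then show "survival q \<in> borel_measurable (lebesgue_on {0..})"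
    by (rule continuous_imp_measurable_on_sets_lebesgue) auto
qed (use survival_le in \<open>auto simp: survival_def\<close>)

lemma mean_lifetime_ge: "1 / b \<le> mean_lifetime q"
proof -
  have "integral {0..} (\<lambda>s. exp (- b * s)) \<le> mean_lifetime q"
    unfolding mean_lifetime_def using b_pos
    by (intro integral_le integrable_on_exp_minus_to_infinity survival_integrable survival_ge) auto
  then show ?thesis
    using integral_unique[OF has_integral_exp_minus_to_infinity[OF b_pos, of 0]] by simp
qed

lemma mean_lifetime_pos: "0 < mean_lifetime q"
  using mean_lifetime_ge b_pos by (meson divide_pos_pos order.strict_trans2 zero_less_one)

lemma inverse_mean_lifetime_le: "inverse (mean_lifetime q) \<le> b"
  using le_imp_inverse_le[OF mean_lifetime_ge] b_pos by simp

end

lemma abs_survival_diff_le: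
  assumes "hazard_rate q1 c b s\<^sub>0" and "hazard_rate q2 c b s\<^sub>0"
    and "\<And>\<tau>. 0 < \<tau> \<Longrightarrow> \<bar>q1 \<tau> - q2 \<tau>\<bar> \<le> \<delta>" and "0 \<le> s"
  shows "\<bar>survival q1 s - survival q2 s\<bar> \<le> exp (c * s\<^sub>0) * \<delta> * (2 / c) * exp (- (c / 2) * s)"
proof -
  interpret q1: hazard_rate q1 c b s\<^sub>0 by fact
  interpret q2: hazard_rate q2 c b s\<^sub>0 by fact
  let ?\<Lambda>1 = "cumulative_hazard q1 s" and ?\<Lambda>2 = "cumulative_hazard q2 s"
  have "0 \<le> \<delta>"
    using assms(3)[of 1] by simp
  have "\<bar>survival q1 s - survival q2 s\<bar> \<le> exp (- min ?\<Lambda>1 ?\<Lambda>2) * \<bar>?\<Lambda>1 - ?\<Lambda>2\<bar>"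
    unfolding survival_def by (rule abs_exp_minus_diff_le)
  also have "\<dots> \<le> (exp (c * s\<^sub>0) * exp (- c * s)) * (\<delta> * s)"
  proof (rule mult_mono)
    show "exp (- min ?\<Lambda>1 ?\<Lambda>2) \<le> exp (c * s\<^sub>0) * exp (- c * s)"
      using q1.survival_le[of s] q2.survival_le[of s] by (simp add: survival_def min_def)
    show "\<bar>?\<Lambda>1 - ?\<Lambda>2\<bar> \<le> \<delta> * s"
      using assms(3,4) by (intro abs_cumulative_hazard_diff_le q1.integrable q2.integrable)
  qed auto
  also have "\<dots> = exp (c * s\<^sub>0) * \<delta> * (s * exp (- c * s))"
    by (simp add: mult_ac)
  also have "\<dots> \<le> exp (c * s\<^sub>0) * \<delta> * (2 / c * exp (- (c / 2) * s))"
    using \<open>0 \<le> \<delta>\<close> by (intro mult_left_mono mult_exp_neg_le q1.c_pos) auto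
  finally show ?thesis
    by (simp add: mult_ac)
qed

lemma abs_mean_lifetime_diff_le:
  assumes "hazard_rate q1 c b s\<^sub>0" and "hazard_rate q2 c b s\<^sub>0"
    and "\<And>\<tau>. 0 < \<tau> \<Longrightarrow> \<bar>q1 \<tau> - q2 \<tau>\<bar> \<le> \<delta>"
  shows "\<bar>mean_lifetime q1 - mean_lifetime q2\<bar> \<le> exp (c * s\<^sub>0) * (2 / c)\<^sup>2 * \<delta>"
proof -
  interpret q1: hazard_rate q1 c b s\<^sub>0 by fact
  interpret q2: hazard_rate q2 c b s\<^sub>0 by fact
  define D where "D = exp (c * s\<^sub>0) * \<delta> * (2 / c)"
  have dominating: "((\<lambda>s. D * exp (- (c / 2) * s)) has_integral D * (2 / c)) {0..}"
    using has_integral_mult_right[OF has_integral_exp_minus_to_infinity[of "c / 2" 0]] q1.c_pos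
    by simp
  have "\<bar>mean_lifetime q1 - mean_lifetime q2\<bar>
      = \<bar>integral {0..} (\<lambda>s. survival q1 s - survival q2 s)\<bar>"
    unfolding mean_lifetime_def
    by (simp add: integral_diff[OF q1.survival_integrable q2.survival_integrable])
  also have "\<dots> \<le> D * (2 / c)"
    using integral_norm_bound_integral[OF
        integrable_diff[OF q1.survival_integrable q2.survival_integrable]
        has_integral_integrable[OF dominating]]
      abs_survival_diff_le[OF assms] integral_unique[OF dominating]
    by (simp add: D_def)
  finally show ?thesis
    by (simp add: D_def power2_eq_square mult_ac)
qed

lemma lipschitz_on_mean_lifetime:
  assumes "\<And>S. S \<in> U \<Longrightarrow> hazard_rate (Q S) c b s\<^sub>0" and "0 \<le> M"
    and "\<And>\<tau> S S'. S \<in> U \<Longrightarrow> S' \<in> U \<Longrightarrow> 0 < \<tau> \<Longrightarrow> \<bar>Q S \<tau> - Q S' \<tau>\<bar> \<le> M * dist S S'"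
  shows "(exp (c * s\<^sub>0) * (2 / c)\<^sup>2 * M)-lipschitz_on U (\<lambda>S. mean_lifetime (Q S))"
proof (rule lipschitz_onI)
  show "dist (mean_lifetime (Q S)) (mean_lifetime (Q S')) \<le> exp (c * s\<^sub>0) * (2 / c)\<^sup>2 * M * dist S S'"
    if "S \<in> U" "S' \<in> U" for S S'
    using abs_mean_lifetime_diff_le[OF assms(1,1) assms(3)] that
    by (simp add: dist_real_def mult.assoc)
qed (use assms(2) in simp)

lemma W1inf_on_lipschitz_in_second:
  assumes "W1inf_on ({0<..} \<times> UNIV) p"
  obtains M where "0 \<le> M" and "\<And>\<tau> S S'. 0 < \<tau> \<Longrightarrow> \<bar>p \<tau> S - p \<tau> S'\<bar> \<le> M * \<bar>S - S'\<bar>"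
proof -
  obtain L where L: "L-lipschitz_on ({0<..} \<times> UNIV) (\<lambda>(s, S). p s S)"
    using assms unfolding W1inf_on_def by blast
  have "\<bar>p \<tau> S - p \<tau> S'\<bar> \<le> L * \<bar>S - S'\<bar>" if "0 < \<tau>" for \<tau> S S'
    using lipschitz_onD[OF L, of "(\<tau>, S)" "(\<tau>, S')"] that
    by (simp add: dist_Pair_Pair dist_real_def)
  then show ?thesis
    using that lipschitz_on_nonneg[OF L] by blast
qed

lemma hazard_rate_if_W1inf_on:
  assumes "W1inf_on ({0<..} \<times> UNIV) p" and "0 < c" and "0 \<le> s\<^sub>0"
    and bounds: "\<And>s. 0 \<le> s \<Longrightarrow> c * indicator {s\<^sub>0<..} s \<le> p s S \<and> p s S \<le> b"
  shows "hazard_rate (\<lambda>\<tau>. p \<tau> S) c b s\<^sub>0"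
proof
  show nonneg: "0 \<le> p \<tau> S" if "0 \<le> \<tau>" for \<tau>
    using bounds[OF that] \<open>0 < c\<close> order_trans[of 0 "c * indicator {s\<^sub>0<..} \<tau>"]
    by (simp add: indicator_def)
  show "0 \<le> \<tau> \<Longrightarrow> p \<tau> S \<le> b" for \<tau>
    using bounds by blast
  show "s\<^sub>0 < \<tau> \<Longrightarrow> c \<le> p \<tau> S" for \<tau>
    using bounds[of \<tau>] \<open>0 \<le> s\<^sub>0\<close> by simp
  obtain L where "L-lipschitz_on ({0<..} \<times> UNIV) (\<lambda>(s, S). p s S)"
    using assms(1) unfolding W1inf_on_def by blast
  then have "continuous_on ({0<..} \<times> UNIV) (\<lambda>(s, S). p s S)"
    by (rule lipschitz_on_continuous_on)
  then have "continuous_on {0<..s} ((\<lambda>(s, S). p s S) \<circ> (\<lambda>\<tau>. (\<tau>, S)))" for s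
    by (intro continuous_on_compose continuous_intros) (auto elim: continuous_on_subset)
  then have "continuous_on {0<..s} (\<lambda>\<tau>. p \<tau> S)" for s
    by (simp add: o_def)
  then show "(\<lambda>\<tau>. p \<tau> S) integrable_on {0..s}" for s
    using nonneg bounds
    by (intro integrable_on_Icc_if_bounded_continuous_on_Ioc[where B = b]) auto
  show "0 < c" "0 \<le> s\<^sub>0"
    by fact+
qed

theorem mainTheorem5:
  fixes p :: "real \<Rightarrow> real \<Rightarrow> real" and p_star p_inf s_star :: real
  assumes "W1inf_on ({0<..} \<times> UNIV) p"
    and "p_star > 0" and "p_inf > 0" and "s_star > 0"
    and "\<And>s S. s \<ge> 0 \<Longrightarrow> p_star * indicator {s_star<..} s \<le> p s S \<and> p s S \<le> p_inf"
  shows "bounded (range (Fmap p)) \<and> (\<exists>L. L-lipschitz_on UNIV (Fmap p))"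
proof -
  obtain M where M: "0 \<le> M" "\<And>\<tau> S S'. 0 < \<tau> \<Longrightarrow> \<bar>p \<tau> S - p \<tau> S'\<bar> \<le> M * \<bar>S - S'\<bar>"
    using W1inf_on_lipschitz_in_second[OF assms(1)] by blast
  have rate: "hazard_rate (\<lambda>\<tau>. p \<tau> S) p_star p_inf s_star" for S
    using assms by (intro hazard_rate_if_W1inf_on) auto
  have lifetime_ge: "1 / p_inf \<le> mean_lifetime (\<lambda>\<tau>. p \<tau> S)" for S
    using hazard_rate.mean_lifetime_ge[OF rate] .
  define K where "K = exp (p_star * s_star) * (2 / p_star)\<^sup>2 * M"
  have "K-lipschitz_on UNIV (\<lambda>S. mean_lifetime (\<lambda>\<tau>. p \<tau> S))"
    unfolding K_def using rate M by (intro lipschitz_on_mean_lifetime) (auto simp: dist_real_def)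
  then have "(K / (1 / p_inf)\<^sup>2)-lipschitz_on UNIV (Fmap p)"
    unfolding Fmap_eq_inverse_mean_lifetime
    by (rule lipschitz_on_inverse) (use lifetime_ge assms(3) in auto)
  moreover have "\<bar>Fmap p S\<bar> \<le> p_inf" for S
    using hazard_rate.mean_lifetime_pos[OF rate, of S] hazard_rate.inverse_mean_lifetime_le[OF rate]
    by (simp add: Fmap_eq_inverse_mean_lifetime)
  ultimately show ?thesis
    unfolding bounded_iff by auto
qed

end
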